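(* Let $(\mathcal V,[\cdot,\cdots,\cdot],S)$ be a generalized metric $n$-Leibniz algebra and $\mathfrak g=\mathrm{Im}\,D\subset\mathfrak{gl}(\mathcal V)$ with the commutator bracket $[\cdot,\cdot]_C$. There is a well-defined bilinear form $\omega$ on $\mathfrak g$ determined by $$\omega(D(u_1,\dots,u_{n-1}),D(v_1,\dots,v_{n-1}))=S(D(u_1,\dots,u_{n-1})v_1,v_2,\dots,v_{n-1}),$$ and $\omega$ is symmetric, non-degenerate and ad-invariant (i.e. $\omega([x,y]_C,z)=-\omega(y,[x,z]_C)$ for $x,y,z\in\mathfrak g$). Consequently $(\mathfrak g,[\cdot,\cdot]_C,\omega)$ is a metric Lie algebra.
   Context: All vector spaces are finite-dimensional over $\mathbb R$. An $n$-Leibniz algebra is a vector space $\mathcal V$ with an $n$-linear map $[\cdot,\cdots,\cdot]$ satisfying $[u_1,\dots,u_{n-1},[v_1,\dots,v_n]]=\sum_{i=1}^n[v_1,\dots,[u_1,\dots,u_{n-1},v_i],\dots,v_n]$. A symmetric $S\in\mathrm{Sym}^{n-1}(\mathcal V^* )$ is non-degenerate if $S(u,v_1,\dots,v_{n-2})=0$ for all $v_j$ implies $u=0$. A generalized metric $n$-Leibniz algebra is an $n$-Leibniz algebra with a symmetric non-degenerate $S\in\mathrm{Sym}^{n-1}(\mathcal V^* )$ satisfying (a) unitarity: $\sum_{i=1}^{n-1}S(v_1,\dots,[u_1,\dots,u_{n-1},v_i],\dots,v_{n-1})=0$ and (b) symmetry: $S([u_1,\dots,u_{n-1},v_1],v_2,\dots,v_{n-1})=S([v_1,\dots,v_{n-1},u_1],u_2,\dots,u_{n-1})$.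 $D(u_1,\dots,u_{n-1})\in\mathfrak{gl}(\mathcal V)$ is $u_n\mapsto[u_1,\dots,u_{n-1},u_n]$, extended linearly to $\otimes^{n-1}\mathcal V$; $\mathfrak g=\mathrm{Im}\,D$ is the span of all such operators, which is closed under the commutator $[A,B]_C=AB-BA$. A metric Lie algebra is a Lie algebra with a symmetric non-degenerate bilinear form $\omega$ with $\omega([x,y],z)=-\omega(y,[x,z])$. *)

theory Defs
  imports "HOL-Analysis.Analysis" "HOL-Combinatorics.Permutations"
begin

definition multilinear :: "nat \<Rightarrow> ('v::real_vector list \<Rightarrow> 'w::real_vector) \<Rightarrow> bool" where
  "multilinear m F \<longleftrightarrow> (\<forall>xs i a b x y. length xs = m \<and> i < m \<longrightarrow>
      F (xs[i := a *\<^sub>R x + b *\<^sub>R y]) = a *\<^sub>R F (xs[i := x]) + b *\<^sub>R F (xs[i := y]))"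

definition n_leibniz :: "nat \<Rightarrow> ('v::real_vector list \<Rightarrow> 'v) \<Rightarrow> bool" where
  "n_leibniz n br \<longleftrightarrow> multilinear n br \<and>
     (\<forall>us vs. length us = n - 1 \<and> length vs = n \<longrightarrow>
        br (us @ [br vs]) = (\<Sum>i<n. br (vs[i := br (us @ [vs ! i])])))"

definition symmetric_form :: "nat \<Rightarrow> ('v list \<Rightarrow> real) \<Rightarrow> bool" where
  "symmetric_form m S \<longleftrightarrow> (\<forall>xs p. length xs = m \<and> p permutes {..<m} \<longrightarrow>
      S (map (\<lambda>i. xs ! p i) [0..<m]) = S xs)"

definition nondegenerate_form :: "nat \<Rightarrow> ('v::zero list \<Rightarrow> real) \<Rightarrow> bool" where
  "nondegenerate_form m S \<longleftrightarrow> (\<forall>u. (\<forall>vs. length vs = m - 1 \<longrightarrow> S (u # vs) = 0) \<longrightarrow> u = 0)"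

definition gen_metric_n_leibniz :: "nat \<Rightarrow> ('v::real_vector list \<Rightarrow> 'v) \<Rightarrow> ('v list \<Rightarrow> real) \<Rightarrow> bool" where
  "gen_metric_n_leibniz n br S \<longleftrightarrow>
     n_leibniz n br \<and> multilinear (n - 1) S \<and> symmetric_form (n - 1) S \<and>
     nondegenerate_form (n - 1) S \<and>
     (\<forall>us vs. length us = n - 1 \<and> length vs = n - 1 \<longrightarrow>
        (\<Sum>i<n - 1. S (vs[i := br (us @ [vs ! i])])) = 0) \<and>
     (\<forall>us vs. length us = n - 1 \<and> length vs = n - 1 \<longrightarrow>
        S (br (us @ [hd vs]) # tl vs) = S (br (vs @ [hd us]) # tl us))"

definition Dop :: "('v list \<Rightarrow> 'v) \<Rightarrow> 'v list \<Rightarrow> 'v \<Rightarrow> 'v" where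
  "Dop br us = (\<lambda>w. br (us @ [w]))"

text \<open>g = Im D: the linear span of all operators D(u_1,...,u_{n-1}).\<close>
definition LieD :: "nat \<Rightarrow> ('v::real_vector list \<Rightarrow> 'v) \<Rightarrow> ('v \<Rightarrow> 'v) set" where
  "LieD n br = {f. \<exists>K c us. finite (K::nat set) \<and> (\<forall>k\<in>K. length (us k) = n - 1) \<and>
      f = (\<lambda>w. \<Sum>k\<in>K. c k *\<^sub>R Dop br (us k) w)}"

definition comm :: "('v::real_vector \<Rightarrow> 'v) \<Rightarrow> ('v \<Rightarrow> 'v) \<Rightarrow> 'v \<Rightarrow> 'v" where
  "comm x y = (\<lambda>w. x (y w) - y (x w))"

definition lincomb :: "real \<Rightarrow> ('v::real_vector \<Rightarrow> 'v) \<Rightarrow> real \<Rightarrow> ('v \<Rightarrow> 'v) \<Rightarrow> 'v \<Rightarrow> 'v" where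
  "lincomb a x b y = (\<lambda>w. a *\<^sub>R x w + b *\<^sub>R y w)"

definition bilinear_on :: "('v::real_vector \<Rightarrow> 'v) set \<Rightarrow> (('v \<Rightarrow> 'v) \<Rightarrow> ('v \<Rightarrow> 'v) \<Rightarrow> real) \<Rightarrow> bool" where
  "bilinear_on G \<omega> \<longleftrightarrow> (\<forall>x\<in>G. \<forall>y\<in>G. \<forall>z\<in>G. \<forall>a b.
      \<omega> (lincomb a x b y) z = a * \<omega> x z + b * \<omega> y z \<and>
      \<omega> z (lincomb a x b y) = a * \<omega> z x + b * \<omega> z y)"

definition metric_lie_algebra_on :: "('v::real_vector \<Rightarrow> 'v) set \<Rightarrow> (('v \<Rightarrow> 'v) \<Rightarrow> ('v \<Rightarrow> 'v) \<Rightarrow> real) \<Rightarrow> bool" where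
  "metric_lie_algebra_on G \<omega> \<longleftrightarrow>
     (\<lambda>w. 0) \<in> G \<and> (\<forall>x\<in>G. \<forall>y\<in>G. \<forall>a b. lincomb a x b y \<in> G) \<and>
     (\<forall>x\<in>G. \<forall>y\<in>G. comm x y \<in> G) \<and>
     (\<forall>x\<in>G. \<forall>y\<in>G. comm x y = lincomb (-1) (comm y x) 0 (\<lambda>w. 0)) \<and>
     (\<forall>x\<in>G. \<forall>y\<in>G. \<forall>z\<in>G. (\<lambda>w. comm x (comm y z) w + comm y (comm z x) w + comm z (comm x y) w) = (\<lambda>w. 0)) \<and>
     bilinear_on G \<omega> \<and>
     (\<forall>x\<in>G. \<forall>y\<in>G. \<omega> x y = \<omega> y x) \<and>
     (\<forall>x\<in>G. (\<forall>y\<in>G. \<omega> x y = 0) \<longrightarrow> x = (\<lambda>w. 0)) \<and>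
     (\<forall>x\<in>G. \<forall>y\<in>G. \<forall>z\<in>G. \<omega> (comm x y) z = - \<omega> y (comm x z))"

end

theory Submission
  imports Defs
begin

text \<open>Every element of \<open>\<gg>\<close> is a finite combination \<open>y = \<Sum>\<^sub>k c\<^sub>k D(u\<^sub>k)\<close>. Pairing
  \<open>x\<close> against such a representation, \<open>\<omega>(x, y) = \<Sum>\<^sub>k c\<^sub>k S(x (hd u\<^sub>k), tl u\<^sub>k)\<close>, is linear
  in \<open>x\<close>; the symmetry axiom of \<open>S\<close> shows that it equals the pairing of \<open>y\<close> against any
  representation of \<open>x\<close>, so \<open>\<omega>\<close> does not depend on the representations and is symmetric
  and bilinear. Non-degeneracy of \<open>\<omega>\<close> is that of \<open>S\<close>, tested against the operators
  \<open>D(w, v\<^sub>2, \<dots>)\<close>. The Leibniz identity says that every \<open>D(u)\<close> acts as a derivation of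
  the bracket, whence \<open>[x, D(w)]\<^sub>C = \<Sum>\<^sub>i D(w\<^sub>1, \<dots>, x w\<^sub>i, \<dots>)\<close>; pairing this with \<open>y\<close> and
  applying unitarity to the operator \<open>x\<close> gives ad-invariance.\<close>

lemma multilinearD:
  assumes "multilinear m F" "length xs = m" "i < m"
  shows "F (xs[i := a *\<^sub>R x + b *\<^sub>R y]) = a *\<^sub>R F (xs[i := x]) + b *\<^sub>R F (xs[i := y])"
  using assms unfolding multilinear_def by blast

lemma multilinear_sum:
  assumes "multilinear m F" "length xs = m" "i < m" "finite J"
  shows "F (xs[i := (\<Sum>j\<in>J. d j *\<^sub>R a j)]) = (\<Sum>j\<in>J. d j *\<^sub>R F (xs[i := a j]))"
  using assms(4)
proof (induction J rule: finite_induct)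
  case empty
  then show ?case using multilinearD[OF assms(1-3), of 0 0 0 0] by simp
next
  case (insert j J)
  have "F (xs[i := (\<Sum>j\<in>insert j J. d j *\<^sub>R a j)]) =
        F (xs[i := d j *\<^sub>R a j + 1 *\<^sub>R (\<Sum>j\<in>J. d j *\<^sub>R a j)])"
    using insert by simp
  also have "\<dots> = d j *\<^sub>R F (xs[i := a j]) + 1 *\<^sub>R F (xs[i := (\<Sum>j\<in>J. d j *\<^sub>R a j)])"
    by (rule multilinearD[OF assms(1-3)])
  finally show ?case using insert by simp
qed

lemma comm_antisym: "comm x y = lincomb (-1) (comm y x) 0 (\<lambda>w. 0)"
  by (simp add: comm_def lincomb_def fun_eq_iff)

lemma comm_jacobi:
  assumes "linear x" "linear y" "linear z"
  shows "(\<lambda>w. comm x (comm y z) w + comm y (comm z x) w + comm z (comm x y) w) = (\<lambda>w. 0)"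
  using assms by (simp add: comm_def linear_diff fun_eq_iff)

lemma comm_sum_right:
  assumes "linear x"
  shows "comm x (\<lambda>w. \<Sum>k\<in>K. c k *\<^sub>R g k w) = (\<lambda>w. \<Sum>k\<in>K. c k *\<^sub>R comm x (g k) w)"
  using assms
  by (simp add: comm_def fun_eq_iff linear_sum linear_scale scaleR_diff_right sum_subtractf)

definition lincomb_closed :: "('v::real_vector \<Rightarrow> 'v) set \<Rightarrow> bool" where
  "lincomb_closed G \<longleftrightarrow> (\<forall>x\<in>G. \<forall>y\<in>G. \<forall>a b. lincomb a x b y \<in> G)"

lemma lincomb_closed_sum:
  assumes "lincomb_closed G" "(\<lambda>w. 0) \<in> G" "finite K" "\<forall>k\<in>K. g k \<in> G"
  shows "(\<lambda>w. \<Sum>k\<in>K. c k *\<^sub>R g k w) \<in> G"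
  using assms(3,4)
proof (induction K rule: finite_induct)
  case empty
  then show ?case using assms(2) by simp
next
  case (insert k K)
  have "(\<lambda>w. \<Sum>k\<in>insert k K. c k *\<^sub>R g k w) = lincomb (c k) (g k) 1 (\<lambda>w. \<Sum>k\<in>K. c k *\<^sub>R g k w)"
    using insert by (simp add: lincomb_def)
  then show ?case using insert assms(1) unfolding lincomb_closed_def by simp
qed

lemma bilinear_on_sum_left:
  assumes bl: "bilinear_on G \<omega>" and cl: "lincomb_closed G" "(\<lambda>w. 0) \<in> G"
    and "finite J" "\<forall>j\<in>J. g j \<in> G" and z: "z \<in> G"
  shows "\<omega> (\<lambda>w. \<Sum>j\<in>J. d j *\<^sub>R g j w) z = (\<Sum>j\<in>J. d j * \<omega> (g j) z)"
  using assms(4,5)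
proof (induction J rule: finite_induct)
  case empty
  have "\<omega> (lincomb 0 z 0 z) z = 0" using bl z unfolding bilinear_on_def by simp
  then show ?case by (simp add: lincomb_def)
next
  case (insert j J)
  have "(\<lambda>w. \<Sum>k\<in>insert j J. d k *\<^sub>R g k w) = lincomb (d j) (g j) 1 (\<lambda>w. \<Sum>k\<in>J. d k *\<^sub>R g k w)"
    using insert by (simp add: lincomb_def)
  moreover have "(\<lambda>w. \<Sum>k\<in>J. d k *\<^sub>R g k w) \<in> G"
    using insert cl by (intro lincomb_closed_sum) auto
  ultimately show ?case using insert bl z unfolding bilinear_on_def by simp
qed

lemma bilinear_on_sum_right:
  assumes bl: "bilinear_on G \<omega>" and cl: "lincomb_closed G" "(\<lambda>w. 0) \<in> G"
    and "finite J" "\<forall>j\<in>J. g j \<in> G" and z: "z \<in> G"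
  shows "\<omega> z (\<lambda>w. \<Sum>j\<in>J. d j *\<^sub>R g j w) = (\<Sum>j\<in>J. d j * \<omega> z (g j))"
proof -
  have "bilinear_on G (\<lambda>x y. \<omega> y x)" using bl unfolding bilinear_on_def by blast
  from bilinear_on_sum_left[OF this cl assms(4-6)] show ?thesis .
qed

definition D_combination ::
    "nat \<Rightarrow> ('v::real_vector list \<Rightarrow> 'v) \<Rightarrow> ('v \<Rightarrow> 'v) \<Rightarrow> nat set \<Rightarrow> (nat \<Rightarrow> real) \<Rightarrow> (nat \<Rightarrow> 'v list) \<Rightarrow> bool" where
  "D_combination n br f K c us \<longleftrightarrow> finite K \<and> (\<forall>k\<in>K. length (us k) = n - 1) \<and>
      f = (\<lambda>w. \<Sum>k\<in>K. c k *\<^sub>R Dop br (us k) w)"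

lemma LieD_iff_D_combination: "f \<in> LieD n br \<longleftrightarrow> (\<exists>K c us. D_combination n br f K c us)"
  unfolding LieD_def D_combination_def by blast

lemma D_combination_Dop: "length us = n - 1 \<Longrightarrow> D_combination n br (Dop br us) {0} (\<lambda>_. 1) (\<lambda>_. us)"
  by (simp add: D_combination_def)

definition some_D_combination ::
    "nat \<Rightarrow> ('v::real_vector list \<Rightarrow> 'v) \<Rightarrow> ('v \<Rightarrow> 'v) \<Rightarrow> nat set \<times> (nat \<Rightarrow> real) \<times> (nat \<Rightarrow> 'v list)" where
  "some_D_combination n br y = (SOME (K, c, us). D_combination n br y K c us)"

lemma D_combination_some:
  assumes "y \<in> LieD n br"
  obtains K c us where "some_D_combination n br y = (K, c, us)" "D_combination n br y K c us"
proof -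
  from assms obtain K c us where "D_combination n br y K c us"
    by (auto simp: LieD_iff_D_combination)
  then have "\<exists>r. (case r of (K, c, us) \<Rightarrow> D_combination n br y K c us)" by auto
  then have "case some_D_combination n br y of (K, c, us) \<Rightarrow> D_combination n br y K c us"
    unfolding some_D_combination_def by (rule someI_ex)
  then show ?thesis using that by (auto split: prod.splits)
qed

definition pairing :: "('v list \<Rightarrow> real) \<Rightarrow> ('v \<Rightarrow> 'v) \<Rightarrow> nat set \<Rightarrow> (nat \<Rightarrow> real) \<Rightarrow> (nat \<Rightarrow> 'v list) \<Rightarrow> real" where
  "pairing S x K c us = (\<Sum>k\<in>K. c k * S (x (hd (us k)) # tl (us k)))"

definition lie_form ::
    "nat \<Rightarrow> ('v::real_vector list \<Rightarrow> 'v) \<Rightarrow> ('v list \<Rightarrow> real) \<Rightarrow> ('v \<Rightarrow> 'v) \<Rightarrow> ('v \<Rightarrow> 'v) \<Rightarrow> real" where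
  "lie_form n br S x y = (case some_D_combination n br y of (K, c, us) \<Rightarrow> pairing S x K c us)"

locale gen_metric_n_leibniz_algebra =
  fixes n :: nat and br :: "'v::real_vector list \<Rightarrow> 'v" and S :: "'v list \<Rightarrow> real"
  assumes n_ge_2: "n \<ge> 2" and gen_metric: "gen_metric_n_leibniz n br S"
begin

abbreviation "\<gg> \<equiv> LieD n br"
abbreviation "\<omega> \<equiv> lie_form n br S"

lemma multilinear_br: "multilinear n br"
  and leibniz: "\<And>us vs. length us = n - 1 \<Longrightarrow> length vs = n \<Longrightarrow>
        br (us @ [br vs]) = (\<Sum>i<n. br (vs[i := br (us @ [vs ! i])]))"
  and multilinear_S: "multilinear (n - 1) S"
  and nondegenerate_S: "nondegenerate_form (n - 1) S"
  and unitarity: "\<And>us vs. length us = n - 1 \<Longrightarrow> length vs = n - 1 \<Longrightarrow>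
        (\<Sum>i<n - 1. S (vs[i := br (us @ [vs ! i])])) = 0"
  and symmetry: "\<And>us vs. length us = n - 1 \<Longrightarrow> length vs = n - 1 \<Longrightarrow>
        S (br (us @ [hd vs]) # tl vs) = S (br (vs @ [hd us]) # tl us)"
  using gen_metric unfolding gen_metric_n_leibniz_def n_leibniz_def by blast+

lemma S_linear_first:
  "length r = n - 2 \<Longrightarrow> S ((a *\<^sub>R x + b *\<^sub>R y) # r) = a * S (x # r) + b * S (y # r)"
  using multilinearD[OF multilinear_S, of "0 # r" 0 a x b y] n_ge_2 by simp

lemma S_sum_first:
  "length r = n - 2 \<Longrightarrow> finite J \<Longrightarrow> S ((\<Sum>j\<in>J. d j *\<^sub>R a j) # r) = (\<Sum>j\<in>J. d j * S (a j # r))"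
  using multilinear_sum[OF multilinear_S, of "0 # r" 0 J d a] n_ge_2 by simp

lemma Dop_eq_br_update: "length us = n - 1 \<Longrightarrow> Dop br us v = br ((us @ [w])[n - 1 := v])"
  by (simp add: Dop_def list_update_append)

lemma linear_Dop:
  assumes "length us = n - 1"
  shows "linear (Dop br us)"
proof (rule linearI)
  have l: "length (us @ [0]) = n" "n - 1 < n" using assms n_ge_2 by auto
  fix a b :: 'v and r :: real
  show "Dop br us (a + b) = Dop br us a + Dop br us b"
    using multilinearD[OF multilinear_br l, of 1 a 1 b] by (simp add: Dop_eq_br_update[OF assms, where w = 0])
  show "Dop br us (r *\<^sub>R b) = r *\<^sub>R Dop br us b"
    using multilinearD[OF multilinear_br l, of r b 0 0] by (simp add: Dop_eq_br_update[OF assms, where w = 0])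
qed

lemma Dop_in_LieD: "length us = n - 1 \<Longrightarrow> Dop br us \<in> \<gg>"
  using D_combination_Dop LieD_iff_D_combination by blast

lemma zero_in_LieD: "(\<lambda>w. 0) \<in> \<gg>"
  unfolding LieD_iff_D_combination D_combination_def by (rule exI[of _ "{}"]) simp

lemma linear_LieD: "x \<in> \<gg> \<Longrightarrow> linear x"
  unfolding LieD_iff_D_combination D_combination_def
  by (auto intro!: linear_compose_sum linear_compose_scale_right linear_Dop)

lemma lincomb_closed_LieD: "lincomb_closed \<gg>"
  unfolding lincomb_closed_def
proof (intro ballI allI)
  fix x y a b assume "x \<in> \<gg>" "y \<in> \<gg>"
  then obtain J d ux K c uy where x: "D_combination n br x J d ux" and y: "D_combination n br y K c uy"
    by (auto simp: LieD_iff_D_combination)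
  \<comment> \<open>merge the two index sets as the even and the odd numbers\<close>
  define I where "I = (\<lambda>j. 2*j) ` J \<union> (\<lambda>k. Suc (2*k)) ` K"
  define e where "e i = (if even i then a * d (i div 2) else b * c (i div 2))" for i
  define u where "u i = (if even i then ux (i div 2) else uy (i div 2))" for i
  have disjoint: "(\<lambda>j. 2*j) ` J \<inter> (\<lambda>k. Suc (2*k)) ` K = {}" by auto presburger
  have inj: "inj_on (\<lambda>j::nat. 2*j) J" "inj_on (\<lambda>k::nat. Suc (2*k)) K" by (auto simp: inj_on_def)
  have "lincomb a x b y = (\<lambda>w. \<Sum>i\<in>I. e i *\<^sub>R Dop br (u i) w)"
  proof
    fix w
    have "(\<Sum>i\<in>I. e i *\<^sub>R Dop br (u i) w) =
        (\<Sum>i\<in>(\<lambda>j. 2*j) ` J. e i *\<^sub>R Dop br (u i) w) + (\<Sum>i\<in>(\<lambda>k. Suc (2*k)) ` K. e i *\<^sub>R Dop br (u i) w)"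
      unfolding I_def using x y disjoint by (intro sum.union_disjoint) (auto simp: D_combination_def)
    also have "\<dots> = (\<Sum>j\<in>J. (a * d j) *\<^sub>R Dop br (ux j) w) + (\<Sum>k\<in>K. (b * c k) *\<^sub>R Dop br (uy k) w)"
      by (simp add: sum.reindex[OF inj(1)] sum.reindex[OF inj(2)] e_def u_def)
    also have "\<dots> = lincomb a x b y w"
      using x y by (simp add: D_combination_def lincomb_def scaleR_sum_right)
    finally show "lincomb a x b y w = (\<Sum>i\<in>I. e i *\<^sub>R Dop br (u i) w)" by simp
  qed
  moreover have "finite I" "\<forall>i\<in>I. length (u i) = n - 1"
    using x y by (auto simp: I_def u_def D_combination_def)
  ultimately show "lincomb a x b y \<in> \<gg>"
    unfolding LieD_iff_D_combination D_combination_def by blast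
qed

lemma sum_in_LieD: "finite K \<Longrightarrow> \<forall>k\<in>K. g k \<in> \<gg> \<Longrightarrow> (\<lambda>w. \<Sum>k\<in>K. c k *\<^sub>R g k w) \<in> \<gg>"
  using lincomb_closed_sum[OF lincomb_closed_LieD zero_in_LieD] .

lemma pairing_swap:
  assumes x: "D_combination n br x J d ux" and y: "D_combination n br y K c uy"
  shows "pairing S x K c uy = pairing S y J d ux"
proof -
  have fin: "finite J" "finite K"
    and lx: "\<And>j. j \<in> J \<Longrightarrow> length (ux j) = n - 1" and ly: "\<And>k. k \<in> K \<Longrightarrow> length (uy k) = n - 1"
    and ex: "\<And>w. x w = (\<Sum>j\<in>J. d j *\<^sub>R Dop br (ux j) w)"
    and ey: "\<And>w. y w = (\<Sum>k\<in>K. c k *\<^sub>R Dop br (uy k) w)"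
    using x y by (auto simp: D_combination_def)
  have "pairing S x K c uy = (\<Sum>k\<in>K. \<Sum>j\<in>J. c k * d j * S (Dop br (ux j) (hd (uy k)) # tl (uy k)))"
    unfolding pairing_def ex
    by (intro sum.cong refl) (simp add: S_sum_first fin ly sum_distrib_left mult.assoc)
  also have "\<dots> = (\<Sum>j\<in>J. \<Sum>k\<in>K. c k * d j * S (Dop br (uy k) (hd (ux j)) # tl (ux j)))"
    by (subst sum.swap) (intro sum.cong refl, simp add: Dop_def symmetry lx ly)
  also have "\<dots> = pairing S y J d ux"
    unfolding pairing_def ey
    by (intro sum.cong refl) (simp add: S_sum_first fin lx sum_distrib_left mult_ac)
  finally show ?thesis .
qed

lemma lie_form_eq_pairing_right:
  assumes "x \<in> \<gg>" "D_combination n br y K c uy"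
  shows "\<omega> x y = pairing S x K c uy"
proof -
  from assms(1) obtain J d ux where x: "D_combination n br x J d ux"
    by (auto simp: LieD_iff_D_combination)
  obtain K' c' uy' where "some_D_combination n br y = (K', c', uy')" "D_combination n br y K' c' uy'"
    using D_combination_some assms(2) LieD_iff_D_combination by blast
  then show ?thesis
    unfolding lie_form_def using pairing_swap[OF x] assms(2) by simp
qed

lemma lie_form_eq_pairing_left:
  assumes "D_combination n br x J d ux" "y \<in> \<gg>"
  shows "\<omega> x y = pairing S y J d ux"
proof -
  obtain K c uy where "some_D_combination n br y = (K, c, uy)" "D_combination n br y K c uy"
    using D_combination_some assms(2) by blast
  then show ?thesis
    unfolding lie_form_def using pairing_swap[OF assms(1)] by simp
qed

lemma lie_form_Dop: "x \<in> \<gg> \<Longrightarrow> length vs = n - 1 \<Longrightarrow> \<omega> x (Dop br vs) = S (x (hd vs) # tl vs)"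
  by (simp add: lie_form_eq_pairing_right[OF _ D_combination_Dop] pairing_def)

lemma lie_form_sym:
  assumes "x \<in> \<gg>" "y \<in> \<gg>"
  shows "\<omega> x y = \<omega> y x"
proof -
  obtain J d ux where x: "D_combination n br x J d ux"
    using assms(1) LieD_iff_D_combination by blast
  show ?thesis
    using lie_form_eq_pairing_left[OF x assms(2)] lie_form_eq_pairing_right[OF assms(2) x] by simp
qed

lemma pairing_lincomb:
  "\<forall>k\<in>K. length (us k) = n - 1 \<Longrightarrow>
   pairing S (lincomb a x b y) K c us = a * pairing S x K c us + b * pairing S y K c us"
  unfolding pairing_def lincomb_def
  by (simp add: S_linear_first sum_distrib_left sum.distrib algebra_simps)

lemma lie_form_lincomb_left:
  assumes "x \<in> \<gg>" "y \<in> \<gg>" "z \<in> \<gg>"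
  shows "\<omega> (lincomb a x b y) z = a * \<omega> x z + b * \<omega> y z"
proof -
  obtain K c uz where z: "D_combination n br z K c uz"
    using assms(3) LieD_iff_D_combination by blast
  have lengths: "\<forall>k\<in>K. length (uz k) = n - 1" using z by (simp add: D_combination_def)
  have "lincomb a x b y \<in> \<gg>"
    using assms lincomb_closed_LieD unfolding lincomb_closed_def by blast
  then have "\<omega> (lincomb a x b y) z = pairing S (lincomb a x b y) K c uz"
    by (rule lie_form_eq_pairing_right[OF _ z])
  also have "\<dots> = a * pairing S x K c uz + b * pairing S y K c uz"
    by (rule pairing_lincomb[OF lengths])
  also have "\<dots> = a * \<omega> x z + b * \<omega> y z"
    using assms by (simp add: lie_form_eq_pairing_right[OF _ z])
  finally show ?thesis .
qed

lemma bilinear_on_lie_form: "bilinear_on \<gg> \<omega>"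
  unfolding bilinear_on_def
proof (intro ballI allI conjI)
  fix x y z a b assume "x \<in> \<gg>" "y \<in> \<gg>" "z \<in> \<gg>"
  moreover have "lincomb a x b y \<in> \<gg>"
    using calculation lincomb_closed_LieD unfolding lincomb_closed_def by blast
  ultimately show "\<omega> (lincomb a x b y) z = a * \<omega> x z + b * \<omega> y z"
    and "\<omega> z (lincomb a x b y) = a * \<omega> z x + b * \<omega> z y"
    by (simp_all add: lie_form_lincomb_left lie_form_sym[of z])
qed

lemma lie_form_nondegenerate:
  assumes x: "x \<in> \<gg>" and "\<forall>y\<in>\<gg>. \<omega> x y = 0"
  shows "x = (\<lambda>w. 0)"
proof
  fix w
  have "S (x w # vs) = 0" if "length vs = n - 1 - 1" for vs
    using assms Dop_in_LieD[of "w # vs"] lie_form_Dop[OF x, of "w # vs"] that n_ge_2 by simp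
  then show "x w = 0" using nondegenerate_S unfolding nondegenerate_form_def by blast
qed

lemma bilinear_on_LieD_expand:
  assumes bl: "bilinear_on \<gg> \<omega>'"
    and x: "D_combination n br x J d ux" and y: "D_combination n br y K c uy"
  shows "\<omega>' x y = (\<Sum>j\<in>J. d j * (\<Sum>k\<in>K. c k * \<omega>' (Dop br (ux j)) (Dop br (uy k))))"
proof -
  have fin: "finite J" "finite K" and Dx: "\<forall>j\<in>J. Dop br (ux j) \<in> \<gg>" and Dy: "\<forall>k\<in>K. Dop br (uy k) \<in> \<gg>"
    using x y by (auto simp: D_combination_def intro: Dop_in_LieD)
  have "y \<in> \<gg>" using y LieD_iff_D_combination by blast
  have expand_left: "\<omega>' x y = (\<Sum>j\<in>J. d j * \<omega>' (Dop br (ux j)) y)"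
    using bilinear_on_sum_left[OF bl lincomb_closed_LieD zero_in_LieD fin(1) Dx \<open>y \<in> \<gg>\<close>] x
    by (simp add: D_combination_def)
  have expand_right: "\<omega>' (Dop br (ux j)) y = (\<Sum>k\<in>K. c k * \<omega>' (Dop br (ux j)) (Dop br (uy k)))"
    if "j \<in> J" for j
    using bilinear_on_sum_right[OF bl lincomb_closed_LieD zero_in_LieD fin(2) Dy, of "Dop br (ux j)"]
      Dx that y by (simp add: D_combination_def)
  show ?thesis using expand_left expand_right by simp
qed

lemma lie_form_unique:
  assumes "bilinear_on \<gg> \<omega>'"
    and "\<forall>us vs. length us = n - 1 \<and> length vs = n - 1 \<longrightarrow>
           \<omega>' (Dop br us) (Dop br vs) = S (Dop br us (hd vs) # tl vs)"
    and "x \<in> \<gg>" "y \<in> \<gg>"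
  shows "\<omega>' x y = \<omega> x y"
proof -
  obtain J d ux K c uy where x: "D_combination n br x J d ux" and y: "D_combination n br y K c uy"
    using assms(3,4) LieD_iff_D_combination by meson
  have "\<omega>' (Dop br (ux j)) (Dop br (uy k)) = \<omega> (Dop br (ux j)) (Dop br (uy k))"
    if "j \<in> J" "k \<in> K" for j k
  proof -
    have "length (ux j) = n - 1" "length (uy k) = n - 1" using that x y by (auto simp: D_combination_def)
    then show ?thesis using assms(2) by (simp add: lie_form_Dop Dop_in_LieD)
  qed
  then show ?thesis
    unfolding bilinear_on_LieD_expand[OF assms(1) x y] bilinear_on_LieD_expand[OF bilinear_on_lie_form x y]
    by simp
qed

lemma Dop_derivation:
  assumes us: "length us = n - 1" and ws: "length ws = n - 1"
  shows "Dop br us (Dop br ws v) =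
    (\<Sum>i<n - 1. Dop br (ws[i := Dop br us (ws ! i)]) v) + Dop br ws (Dop br us v)"
proof -
  have n: "n = Suc (n - 1)" using n_ge_2 by simp
  have "Dop br us (Dop br ws v) = (\<Sum>i<n. br ((ws @ [v])[i := br (us @ [(ws @ [v]) ! i])]))"
    unfolding Dop_def using us ws n_ge_2 by (intro leibniz) auto
  also have "\<dots> = (\<Sum>i<n - 1. br ((ws @ [v])[i := br (us @ [(ws @ [v]) ! i])])) +
       br ((ws @ [v])[n - 1 := br (us @ [(ws @ [v]) ! (n - 1)])])"
    by (subst n) (simp only: sum.lessThan_Suc diff_Suc_1)
  also have "\<dots> = (\<Sum>i<n - 1. Dop br (ws[i := Dop br us (ws ! i)]) v) + Dop br ws (Dop br us v)"
    by (simp add: Dop_def list_update_append nth_append ws)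
  finally show ?thesis .
qed

lemma comm_Dop:
  assumes x: "x \<in> \<gg>" and ws: "length ws = n - 1"
  shows "comm x (Dop br ws) = (\<lambda>v. \<Sum>i<n - 1. 1 *\<^sub>R Dop br (ws[i := x (ws ! i)]) v)"
proof
  fix v
  from x obtain J d ux where "D_combination n br x J d ux"
    by (auto simp: LieD_iff_D_combination)
  then have fin: "finite J" and ux: "\<And>j. j \<in> J \<Longrightarrow> length (ux j) = n - 1"
    and ex: "\<And>w. x w = (\<Sum>j\<in>J. d j *\<^sub>R Dop br (ux j) w)" by (auto simp: D_combination_def)
  have lin: "linear (Dop br ws)" by (rule linear_Dop[OF ws])
  have "comm x (Dop br ws) v =
      (\<Sum>j\<in>J. d j *\<^sub>R (Dop br (ux j) (Dop br ws v) - Dop br ws (Dop br (ux j) v)))"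
    by (simp add: comm_def ex linear_sum[OF lin] linear_scale[OF lin] scaleR_diff_right sum_subtractf)
  also have "\<dots> = (\<Sum>i<n - 1. \<Sum>j\<in>J. d j *\<^sub>R Dop br (ws[i := Dop br (ux j) (ws ! i)]) v)"
    by (simp add: Dop_derivation[OF ux ws] scaleR_sum_right sum.swap[of _ J])
  also have "\<dots> = (\<Sum>i<n - 1. Dop br (ws[i := x (ws ! i)]) v)"
  proof (intro sum.cong refl)
    fix i assume "i \<in> {..<n - 1}"
    then have l: "length (ws @ [v]) = n" "i < n"
      and e: "\<And>a. Dop br (ws[i := a]) v = br ((ws @ [v])[i := a])"
      using ws n_ge_2 by (auto simp: Dop_def list_update_append)
    show "(\<Sum>j\<in>J. d j *\<^sub>R Dop br (ws[i := Dop br (ux j) (ws ! i)]) v) = Dop br (ws[i := x (ws ! i)]) v"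
      unfolding e ex by (rule multilinear_sum[OF multilinear_br l fin, symmetric])
  qed
  finally show "comm x (Dop br ws) v = (\<Sum>i<n - 1. 1 *\<^sub>R Dop br (ws[i := x (ws ! i)]) v)"
    by simp
qed

lemma comm_in_LieD:
  assumes x: "x \<in> \<gg>" and y: "y \<in> \<gg>"
  shows "comm x y \<in> \<gg>"
proof -
  have comm_Dop_in: "comm x (Dop br ws) \<in> \<gg>" if "length ws = n - 1" for ws
    unfolding comm_Dop[OF x that] using that by (intro sum_in_LieD) (auto intro: Dop_in_LieD)
  from y obtain K c uy where "D_combination n br y K c uy"
    by (auto simp: LieD_iff_D_combination)
  then show ?thesis
    by (auto simp: D_combination_def comm_sum_right[OF linear_LieD[OF x]]
        intro!: sum_in_LieD comm_Dop_in)
qed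

lemma unitarity_LieD:
  assumes x: "x \<in> \<gg>" and vs: "length vs = n - 1"
  shows "(\<Sum>i<n - 1. S (vs[i := x (vs ! i)])) = 0"
proof -
  from x obtain J d ux where "D_combination n br x J d ux"
    by (auto simp: LieD_iff_D_combination)
  then have fin: "finite J" and ux: "\<And>j. j \<in> J \<Longrightarrow> length (ux j) = n - 1"
    and ex: "\<And>w. x w = (\<Sum>j\<in>J. d j *\<^sub>R Dop br (ux j) w)" by (auto simp: D_combination_def)
  have "(\<Sum>i<n - 1. S (vs[i := x (vs ! i)])) =
      (\<Sum>j\<in>J. d j * (\<Sum>i<n - 1. S (vs[i := br (ux j @ [vs ! i])])))"
    unfolding ex by (simp add: multilinear_sum[OF multilinear_S vs _ fin] Dop_def
        sum_distrib_left sum.swap[of _ J])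
  also have "\<dots> = 0" by (rule sum.neutral) (use unitarity[OF ux vs] in simp)
  finally show ?thesis .
qed

lemma lie_form_comm_Dop:
  assumes x: "x \<in> \<gg>" and y: "y \<in> \<gg>" and ws: "length ws = n - 1"
  shows "\<omega> y (comm x (Dop br ws)) = - S (comm x y (hd ws) # tl ws)"
proof -
  obtain m where m: "n - 1 = Suc m" using n_ge_2 by (intro that[of "n - 2"]) simp
  obtain w t where wt: "ws = w # t" using ws m by (cases ws) auto
  have t: "length t = n - 2" using ws wt by simp
  have updates: "\<forall>i\<in>{..<n - 1}. length (ws[i := x (ws ! i)]) = n - 1" using ws by simp
  have "\<omega> y (comm x (Dop br ws)) = (\<Sum>i<n - 1. 1 * \<omega> y (Dop br (ws[i := x (ws ! i)])))"
    unfolding comm_Dop[OF x ws]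
    by (rule bilinear_on_sum_right[OF bilinear_on_lie_form lincomb_closed_LieD zero_in_LieD _ _ y])
      (use updates in \<open>auto intro: Dop_in_LieD\<close>)
  also have "\<dots> = (\<Sum>i<n - 1. S (y (hd (ws[i := x (ws ! i)])) # tl (ws[i := x (ws ! i)])))"
    by (intro sum.cong refl) (simp add: lie_form_Dop[OF y] ws)
  also have "\<dots> = S (y (x w) # t) + (\<Sum>i<m. S (y w # t[i := x (t ! i)]))"
    unfolding m wt by (simp only: sum.lessThan_Suc_shift) simp
  \<comment> \<open>unitarity for the operator \<open>x\<close> at the arguments \<open>(y w, t)\<close>\<close>
  also have "(\<Sum>i<m. S (y w # t[i := x (t ! i)])) = - S (x (y w) # t)"
  proof -
    have "(\<Sum>i<n - 1. S ((y w # t)[i := x ((y w # t) ! i)])) = 0"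
      using unitarity_LieD[OF x, of "y w # t"] ws wt by simp
    then show ?thesis unfolding m by (simp only: sum.lessThan_Suc_shift) simp
  qed
  also have "S (y (x w) # t) + - S (x (y w) # t) = - S (comm x y (hd ws) # tl ws)"
    using S_linear_first[OF t, of 1 "x (y w)" "-1" "y (x w)"] by (simp add: wt comm_def)
  finally show ?thesis .
qed

lemma lie_form_invariant:
  assumes x: "x \<in> \<gg>" and y: "y \<in> \<gg>" and z: "z \<in> \<gg>"
  shows "\<omega> (comm x y) z = - \<omega> y (comm x z)"
proof -
  from z obtain K c uz where uz: "D_combination n br z K c uz"
    by (auto simp: LieD_iff_D_combination)
  then have fin: "finite K" and lengths: "\<And>k. k \<in> K \<Longrightarrow> length (uz k) = n - 1"
    and ez: "z = (\<lambda>w. \<Sum>k\<in>K. c k *\<^sub>R Dop br (uz k) w)" by (auto simp: D_combination_def)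
  have "\<omega> y (comm x z) = (\<Sum>k\<in>K. c k * \<omega> y (comm x (Dop br (uz k))))"
    unfolding ez comm_sum_right[OF linear_LieD[OF x]]
    using lengths by (intro bilinear_on_sum_right[OF bilinear_on_lie_form lincomb_closed_LieD
        zero_in_LieD fin _ y]) (auto intro!: comm_in_LieD[OF x] Dop_in_LieD)
  also have "\<dots> = - pairing S (comm x y) K c uz"
    by (simp add: lie_form_comm_Dop[OF x y lengths] pairing_def sum_negf)
  also have "\<dots> = - \<omega> (comm x y) z"
    by (simp add: lie_form_eq_pairing_right[OF comm_in_LieD[OF x y] uz])
  finally show ?thesis by simp
qed

lemma metric_lie_algebra_lie_form: "metric_lie_algebra_on \<gg> \<omega>"
  unfolding metric_lie_algebra_on_def
proof (intro conjI)
  show "\<forall>x\<in>\<gg>. \<forall>y\<in>\<gg>. \<forall>a b. lincomb a x b y \<in> \<gg>"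
    using lincomb_closed_LieD unfolding lincomb_closed_def .
  show "\<forall>x\<in>\<gg>. \<forall>y\<in>\<gg>. \<forall>z\<in>\<gg>.
      (\<lambda>w. comm x (comm y z) w + comm y (comm z x) w + comm z (comm x y) w) = (\<lambda>w. 0)"
    by (intro ballI comm_jacobi linear_LieD)
qed (use zero_in_LieD comm_in_LieD comm_antisym bilinear_on_lie_form lie_form_sym
      lie_form_nondegenerate lie_form_invariant in blast)+

end

theorem mainTheorem3:
  fixes n :: nat
    and br :: "'v::euclidean_space list \<Rightarrow> 'v"
    and S :: "'v list \<Rightarrow> real"
  assumes "n \<ge> 2"
    and "gen_metric_n_leibniz n br S"
  shows "\<exists>\<omega>. bilinear_on (LieD n br) \<omega> \<and>
     (\<forall>us vs. length us = n - 1 \<and> length vs = n - 1 \<longrightarrow>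
        \<omega> (Dop br us) (Dop br vs) = S (Dop br us (hd vs) # tl vs)) \<and>
     (\<forall>\<omega>'. bilinear_on (LieD n br) \<omega>' \<and>
        (\<forall>us vs. length us = n - 1 \<and> length vs = n - 1 \<longrightarrow>
           \<omega>' (Dop br us) (Dop br vs) = S (Dop br us (hd vs) # tl vs))
        \<longrightarrow> (\<forall>x\<in>LieD n br. \<forall>y\<in>LieD n br. \<omega>' x y = \<omega> x y)) \<and>
     (\<forall>x\<in>LieD n br. \<forall>y\<in>LieD n br. \<omega> x y = \<omega> y x) \<and>
     (\<forall>x\<in>LieD n br. (\<forall>y\<in>LieD n br. \<omega> x y = 0) \<longrightarrow> x = (\<lambda>w. 0)) \<and>
     (\<forall>x\<in>LieD n br. \<forall>y\<in>LieD n br. \<forall>z\<in>LieD n br. \<omega> (comm x y) z = - \<omega> y (comm x z)) \<and>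
     metric_lie_algebra_on (LieD n br) \<omega>"
proof -
  interpret gen_metric_n_leibniz_algebra n br S
    using assms by unfold_locales
  show ?thesis
  proof (intro exI[of _ "lie_form n br S"] conjI)
    show "\<forall>us vs. length us = n - 1 \<and> length vs = n - 1 \<longrightarrow>
        \<omega> (Dop br us) (Dop br vs) = S (Dop br us (hd vs) # tl vs)"
      by (simp add: lie_form_Dop Dop_in_LieD)
  qed (use bilinear_on_lie_form lie_form_unique lie_form_sym lie_form_nondegenerate
      lie_form_invariant metric_lie_algebra_lie_form in blast)+
qed

end
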